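(* Let $S=\{s_f^h : f\in\{1,\dots,F\},\ h\in\{1,\dots,H\}\}$ and, for $X\subseteq S$, let $\mathbf{X}(X)\in\{0,1\}^{F\times H}$ be given by $x_{f,h}=1$ iff $s_f^h\in X$. Define the set function $G:2^S\to\mathbb{R}$ by $$G(X)=\sum_{u=1}^U\big(\omega_{0,u}-\bar D_u(\mathbf{X}(X))\big),$$ where, for a placement $\mathbf{X}$, $$\bar D_u=\sum_{j=1}^{|\mathcal{H}(u)|-1}\omega_{(j)_u,u}\sum_{f=1}^F\Big[\prod_{i=1}^{j-1}(1-x_{f,(i)_u})\Big]x_{f,(j)_u}P_f+\omega_{0,u}\sum_{f=1}^F\Big[\prod_{i=1}^{|\mathcal{H}(u)|-1}(1-x_{f,(i)_u})\Big]P_f.$$ Then $G$ is a monotone (nondecreasing) submodular set function.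
   Context: Setting: helpers $\{0,1,\dots,H\}$, where helper $0$ is the base station; users $\{1,\dots,U\}$; files $\{1,\dots,F\}$ with request probabilities $P_f\ge 0$, $\sum_f P_f=1$. A bipartite graph with edge set $\mathcal{E}$ between helpers and users, with $(0,u)\in\mathcal{E}$ for all $u$; $\mathcal{H}(u)=\{h:(h,u)\in\mathcal{E}\}$ (so $0\in\mathcal{H}(u)$). Nonnegative reals $\omega_{h,u}$ (average download time per bit on link $(h,u)$) satisfy $\omega_{0,u}\ge\omega_{h,u}$ for all $(h,u)\in\mathcal{E}$, and $\omega_{h,u}=\omega_\infty$ for $(h,u)\notin\mathcal{E}$, where $\omega_\infty$ is a constant much larger than $\max_u\omega_{0,u}$. For each user $u$, $(j)_u$ denotes the helper in $\mathcal{H}(u)$ with the $j$-th smallest delay $\omega_{(j)_u,u}$, with the ordering chosen so that $(|\mathcal{H}(u)|)_u=0$ (the base station is last). Conventions: an empty product equals $1$, an empty sum equals $0$. Set functions: $G$ is submodular if $G(A\cup\{i\})-G(A)\ge G(B\cup\{i\})-G(B)$ for all $A\subseteq B\subseteq S$ and $i\in S\setminus B$; monotone if $A\subseteq B$ implies $G(A)\le G(B)$. *)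

theory Defs
  imports "HOL-Analysis.Analysis"
begin

text \<open>Helpers are 0..H (0 = base station), users 1..U, files 1..F.
  The edge set E consists of pairs (h,u).  The neighbourhood of user u: \<close>
definition Hset :: "(nat \<times> nat) set \<Rightarrow> nat \<Rightarrow> nat \<Rightarrow> nat set" where
  "Hset E H u = {h. h \<le> H \<and> (h, u) \<in> E}"

definition Sground :: "nat \<Rightarrow> nat \<Rightarrow> (nat \<times> nat) set" where
  "Sground F H = {1..F} \<times> {1..H}"

definition xX :: "(nat \<times> nat) set \<Rightarrow> nat \<Rightarrow> nat \<Rightarrow> real" where
  "xX X f h = (if (f, h) \<in> X then 1 else 0)"

text \<open>Average delay of user u; ordu u j is the helper (j)_u, m = |H(u)|.\<close>
definition Dbar :: "(nat \<Rightarrow> nat \<Rightarrow> real) \<Rightarrow> (nat \<Rightarrow> real) \<Rightarrow> nat \<Rightarrow>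
    (nat \<Rightarrow> nat \<Rightarrow> nat) \<Rightarrow> nat \<Rightarrow> (nat \<times> nat) set \<Rightarrow> nat \<Rightarrow> real" where
  "Dbar \<omega> P F ordu m X u =
     (\<Sum>j = 1..m - 1. \<omega> (ordu u j) u *
        (\<Sum>f = 1..F. (\<Prod>i = 1..j - 1. 1 - xX X f (ordu u i)) * xX X f (ordu u j) * P f))
   + \<omega> 0 u * (\<Sum>f = 1..F. (\<Prod>i = 1..m - 1. 1 - xX X f (ordu u i)) * P f)"

definition Gfun :: "(nat \<times> nat) set \<Rightarrow> nat \<Rightarrow> nat \<Rightarrow> nat \<Rightarrow> (nat \<Rightarrow> nat \<Rightarrow> real) \<Rightarrow>
    (nat \<Rightarrow> real) \<Rightarrow> (nat \<Rightarrow> nat \<Rightarrow> nat) \<Rightarrow> (nat \<times> nat) set \<Rightarrow> real" where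
  "Gfun E H U F \<omega> P ordu X =
     (\<Sum>u = 1..U. \<omega> 0 u - Dbar \<omega> P F ordu (card (Hset E H u)) X u)"

definition submodular_set_fun :: "'a set \<Rightarrow> ('a set \<Rightarrow> real) \<Rightarrow> bool" where
  "submodular_set_fun S G \<longleftrightarrow>
     (\<forall>A B i. A \<subseteq> B \<and> B \<subseteq> S \<and> i \<in> S - B \<longrightarrow>
        G (A \<union> {i}) - G A \<ge> G (B \<union> {i}) - G B)"

definition monotone_set_fun :: "'a set \<Rightarrow> ('a set \<Rightarrow> real) \<Rightarrow> bool" where
  "monotone_set_fun S G \<longleftrightarrow> (\<forall>A B. A \<subseteq> B \<and> B \<subseteq> S \<longrightarrow> G A \<le> G B)"

end

theory Submission
  imports Defs
begin

text \<open>For a fixed user and file, the request is served by the nearest helper (in the delay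
  order) that caches the file, and by the base station if there is none.  Since the helpers
  are sorted by delay, the per-file delay is therefore the minimum of the delays over the
  caching helpers together with the base station.  Adding items to the placement only enlarges
  the set over which this minimum is taken, so the delay decreases, and it decreases by less
  when the set is already larger.  The utility is a constant minus a nonnegative combination
  of these per-file delays, hence monotone and submodular.\<close>

lemma monotone_submodular_minus_weighted_sum:
  fixes c :: "'k \<Rightarrow> real" and \<phi> :: "'k \<Rightarrow> 'a set \<Rightarrow> real"
  assumes c_nonneg: "\<And>k. k \<in> K \<Longrightarrow> c k \<ge> 0"
    and antimono: "\<And>k A B. A \<subseteq> B \<Longrightarrow> \<phi> k B \<le> \<phi> k A"
    and decrement_antimono:
      "\<And>k A B i. A \<subseteq> B \<Longrightarrow> \<phi> k B - \<phi> k (B \<union> {i}) \<le> \<phi> k A - \<phi> k (A \<union> {i})"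
  shows "monotone_set_fun S (\<lambda>X. a - (\<Sum>k\<in>K. c k * \<phi> k X))"
    and "submodular_set_fun S (\<lambda>X. a - (\<Sum>k\<in>K. c k * \<phi> k X))"
proof -
  show "monotone_set_fun S (\<lambda>X. a - (\<Sum>k\<in>K. c k * \<phi> k X))"
    unfolding monotone_set_fun_def
    using c_nonneg antimono by (auto intro!: sum_mono mult_left_mono)
  have "(\<Sum>k\<in>K. c k * (\<phi> k B - \<phi> k (B \<union> {i}))) \<le> (\<Sum>k\<in>K. c k * (\<phi> k A - \<phi> k (A \<union> {i})))"
    if "A \<subseteq> B" for A B i
    using c_nonneg decrement_antimono[OF that] by (auto intro!: sum_mono mult_left_mono)
  then show "submodular_set_fun S (\<lambda>X. a - (\<Sum>k\<in>K. c k * \<phi> k X))"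
    unfolding submodular_set_fun_def by (simp add: sum_subtractf right_diff_distrib)
qed

lemma Min_image_Un_decrement_antimono:
  fixes w :: "'a \<Rightarrow> real"
  assumes "finite L" "K \<subseteq> L" "K \<noteq> {}" "finite J"
  shows "Min (w ` L) - Min (w ` (L \<union> J)) \<le> Min (w ` K) - Min (w ` (K \<union> J))"
proof (cases "J = {}")
  case False
  have "finite K" using assms(1,2) finite_subset by blast
  then have "Min (w ` (M \<union> J)) = min (Min (w ` M)) (Min (w ` J))" if "M \<in> {K, L}" for M
    using that assms False by (auto simp: image_Un intro!: Min_Un)
  moreover have "Min (w ` L) \<le> Min (w ` K)"
    using assms by (auto intro: Min_antimono)
  ultimately show ?thesis by (simp add: min_def)
qed simp

text \<open>Here \<open>w j\<close> is the delay of the \<open>j\<close>-th nearest helper, \<open>g j\<close> the item meaning that this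
  helper caches the file, and index \<open>m\<close> is the base station, which always has the file.\<close>

definition nearest_cost :: "(nat \<Rightarrow> real) \<Rightarrow> nat \<Rightarrow> (nat \<Rightarrow> 'a) \<Rightarrow> 'a set \<Rightarrow> real" where
  "nearest_cost w m g X = Min (w ` ({j \<in> {1..m-1}. g j \<in> X} \<union> {m}))"

lemma nearest_cost_antimono:
  "A \<subseteq> B \<Longrightarrow> nearest_cost w m g B \<le> nearest_cost w m g A"
  unfolding nearest_cost_def by (rule Min_antimono) auto

lemma nearest_cost_decrement_antimono:
  assumes "A \<subseteq> B"
  shows "nearest_cost w m g B - nearest_cost w m g (B \<union> {i})
       \<le> nearest_cost w m g A - nearest_cost w m g (A \<union> {i})"
proof -
  have "{j \<in> {1..m-1}. g j \<in> X \<union> {i}} \<union> {m}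
      = ({j \<in> {1..m-1}. g j \<in> X} \<union> {m}) \<union> {j \<in> {1..m-1}. g j = i}" for X
    by auto
  then show ?thesis
    unfolding nearest_cost_def using assms
    by (simp only:) (rule Min_image_Un_decrement_antimono; auto)
qed

lemma Min_image_sorted:
  fixes w :: "nat \<Rightarrow> real"
  assumes sorted: "\<And>i j. 1 \<le> i \<Longrightarrow> i \<le> j \<Longrightarrow> j \<le> m \<Longrightarrow> w i \<le> w j"
    and "K \<subseteq> {1..m}" "K \<noteq> {}"
  shows "Min (w ` K) = w (Min K)"
proof -
  have "finite K" using assms(2) finite_subset by blast
  then have "Min K \<in> K" "\<And>j. j \<in> K \<Longrightarrow> Min K \<le> j"
    using assms(3) by auto
  with \<open>finite K\<close> assms(2) show ?thesis
    by (intro Min_eqI) (auto intro!: sorted)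
qed

lemma first_hit_sum_eq:
  fixes w x :: "nat \<Rightarrow> real"
  assumes k: "1 \<le> k" "k \<le> m"
    and before_k: "\<And>j. 1 \<le> j \<Longrightarrow> j < k \<Longrightarrow> x j = 0"
    and at_k: "k < m \<Longrightarrow> x k = 1"
  shows "(\<Sum>j = 1..m-1. w j * ((\<Prod>i = 1..j-1. 1 - x i) * x j))
           + w m * (\<Prod>i = 1..m-1. 1 - x i) = w k"
proof -
  have prod_one: "(\<Prod>i = 1..j-1. 1 - x i) = 1" if "j \<le> k" for j
    using that before_k by (intro prod.neutral) auto
  have prod_after: "(\<Prod>i = 1..j-1. 1 - x i) = 0" if "k < j" "j \<le> m" for j
    using that k at_k by (intro prod_zero) (auto intro!: bexI[of _ k])
  have term_zero: "w j * ((\<Prod>i = 1..j-1. 1 - x i) * x j) = 0" if "j \<in> {1..m-1} - {k}" for j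
    using that before_k prod_after[of j] by (cases "j < k") auto
  show ?thesis
  proof (cases "k < m")
    case True
    have "(\<Sum>j = 1..m-1. w j * ((\<Prod>i = 1..j-1. 1 - x i) * x j))
        = w k * ((\<Prod>i = 1..k-1. 1 - x i) * x k)
          + (\<Sum>j \<in> {1..m-1} - {k}. w j * ((\<Prod>i = 1..j-1. 1 - x i) * x j))"
      using True k by (intro sum.remove) auto
    also have "(\<Sum>j \<in> {1..m-1} - {k}. w j * ((\<Prod>i = 1..j-1. 1 - x i) * x j)) = 0"
      by (intro sum.neutral ballI term_zero)
    finally show ?thesis
      using True prod_one prod_after at_k by simp
  next
    case False
    then have "k = m" using k by simp
    moreover have "(\<Sum>j = 1..m-1. w j * ((\<Prod>i = 1..j-1. 1 - x i) * x j)) = 0"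
      using \<open>k = m\<close> by (intro sum.neutral ballI term_zero) auto
    ultimately show ?thesis using prod_one by simp
  qed
qed

lemma first_hit_sum_eq_nearest_cost:
  fixes w :: "nat \<Rightarrow> real"
  assumes "1 \<le> m"
    and sorted: "\<And>i j. 1 \<le> i \<Longrightarrow> i \<le> j \<Longrightarrow> j \<le> m \<Longrightarrow> w i \<le> w j"
  shows "(\<Sum>j = 1..m-1. w j * ((\<Prod>i = 1..j-1. 1 - xX X f (h i)) * xX X f (h j)))
           + w m * (\<Prod>i = 1..m-1. 1 - xX X f (h i))
         = nearest_cost w m (\<lambda>j. (f, h j)) X"
proof -
  define K where "K = {j \<in> {1..m-1}. (f, h j) \<in> X} \<union> {m}"
  have K: "K \<subseteq> {1..m}" "m \<in> K" "finite K"
    using assms(1) by (auto simp: K_def)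
  have "nearest_cost w m (\<lambda>j. (f, h j)) X = w (Min K)"
    unfolding nearest_cost_def K_def[symmetric] using K sorted
    by (intro Min_image_sorted) auto
  moreover have "Min K \<in> K" "\<And>j. j \<in> K \<Longrightarrow> Min K \<le> j"
    using K by (auto intro: Min_in)
  then have "Min K \<le> m" "1 \<le> Min K" "\<And>j. 1 \<le> j \<Longrightarrow> j < Min K \<Longrightarrow> xX X f (h j) = 0"
      "Min K < m \<Longrightarrow> xX X f (h (Min K)) = 1"
    using K by (fastforce simp: K_def xX_def)+
  ultimately show ?thesis
    by (subst first_hit_sum_eq[where k = "Min K"]) (auto simp: xX_def)
qed

lemma Dbar_eq_sum_nearest_cost:
  assumes "1 \<le> m" and base_last: "ordu u m = 0"
    and sorted: "\<And>i j. 1 \<le> i \<Longrightarrow> i \<le> j \<Longrightarrow> j \<le> m \<Longrightarrow> \<omega> (ordu u i) u \<le> \<omega> (ordu u j) u"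
  shows "Dbar \<omega> P F ordu m X u
       = (\<Sum>f = 1..F. P f * nearest_cost (\<lambda>j. \<omega> (ordu u j) u) m (\<lambda>j. (f, ordu u j)) X)"
proof -
  have "Dbar \<omega> P F ordu m X u = (\<Sum>f = 1..F. P f *
      ((\<Sum>j = 1..m-1. \<omega> (ordu u j) u *
          ((\<Prod>i = 1..j-1. 1 - xX X f (ordu u i)) * xX X f (ordu u j)))
       + \<omega> (ordu u m) u * (\<Prod>i = 1..m-1. 1 - xX X f (ordu u i))))"
    unfolding Dbar_def base_last
    by (simp add: sum.distrib distrib_left sum_distrib_left mult_ac) (rule sum.swap)
  also have "\<dots> = (\<Sum>f = 1..F. P f *
      nearest_cost (\<lambda>j. \<omega> (ordu u j) u) m (\<lambda>j. (f, ordu u j)) X)"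
    using assms by (intro sum.cong refl arg_cong[where f = "(*) (P _)"] first_hit_sum_eq_nearest_cost)
  finally show ?thesis .
qed

theorem mainTheorem3:
  fixes H U F :: nat
    and E :: "(nat \<times> nat) set"
    and \<omega> :: "nat \<Rightarrow> nat \<Rightarrow> real"
    and \<omega>inf :: real
    and P :: "nat \<Rightarrow> real"
    and ordu :: "nat \<Rightarrow> nat \<Rightarrow> nat"
  assumes P_nonneg: "\<forall>f\<in>{1..F}. P f \<ge> 0"
    and P_sum: "(\<Sum>f = 1..F. P f) = 1"
    and E_sub: "E \<subseteq> {0..H} \<times> {1..U}"
    and base_edge: "\<forall>u\<in>{1..U}. (0, u) \<in> E"
    and \<omega>_nonneg: "\<forall>h u. \<omega> h u \<ge> 0"
    and \<omega>_base: "\<forall>(h, u)\<in>E. \<omega> 0 u \<ge> \<omega> h u"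
    and \<omega>_inf: "\<forall>h u. (h, u) \<notin> E \<longrightarrow> \<omega> h u = \<omega>inf"
    and \<omega>inf_large: "\<forall>u\<in>{1..U}. \<omega>inf > \<omega> 0 u"
    and ord_bij: "\<forall>u\<in>{1..U}. bij_betw (ordu u) {1..card (Hset E H u)} (Hset E H u)"
    and ord_sorted: "\<forall>u\<in>{1..U}. \<forall>i j. 1 \<le> i \<and> i \<le> j \<and> j \<le> card (Hset E H u) \<longrightarrow>
                        \<omega> (ordu u i) u \<le> \<omega> (ordu u j) u"
    and ord_last: "\<forall>u\<in>{1..U}. ordu u (card (Hset E H u)) = 0"
  shows "monotone_set_fun (Sground F H) (Gfun E H U F \<omega> P ordu)
       \<and> submodular_set_fun (Sground F H) (Gfun E H U F \<omega> P ordu)"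
proof -
  define m where "m u = card (Hset E H u)" for u
  define \<phi> :: "nat \<times> nat \<Rightarrow> (nat \<times> nat) set \<Rightarrow> real"
    where "\<phi> k = nearest_cost (\<lambda>j. \<omega> (ordu (fst k) j) (fst k)) (m (fst k)) (\<lambda>j. (snd k, ordu (fst k) j))"
    for k
  have m_pos: "1 \<le> m u" if "u \<in> {1..U}" for u
  proof -
    have "0 \<in> Hset E H u" "finite (Hset E H u)"
      using base_edge that by (auto simp: Hset_def)
    then show ?thesis
      unfolding m_def by (metis One_nat_def Suc_leI card_gt_0_iff empty_iff)
  qed
  have Dbar_eq: "Dbar \<omega> P F ordu (m u) X u = (\<Sum>f = 1..F. P f * \<phi> (u, f) X)"
    if "u \<in> {1..U}" for u X
    unfolding \<phi>_def fst_conv snd_conv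
    by (rule Dbar_eq_sum_nearest_cost) (use that m_pos ord_last ord_sorted in \<open>auto simp: m_def\<close>)
  have G: "Gfun E H U F \<omega> P ordu
      = (\<lambda>X. (\<Sum>u = 1..U. \<omega> 0 u) - (\<Sum>k \<in> {1..U} \<times> {1..F}. P (snd k) * \<phi> k X))"
    unfolding Gfun_def m_def[symmetric] sum_subtractf sum.cartesian_product'
    by (simp add: Dbar_eq)
  have "\<phi> k B \<le> \<phi> k A" if "A \<subseteq> B" for k A B
    unfolding \<phi>_def by (rule nearest_cost_antimono[OF that])
  moreover have "\<phi> k B - \<phi> k (B \<union> {i}) \<le> \<phi> k A - \<phi> k (A \<union> {i})" if "A \<subseteq> B" for k A B i
    unfolding \<phi>_def by (rule nearest_cost_decrement_antimono[OF that])
  ultimately show ?thesis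
    unfolding G using P_nonneg by (auto intro!: monotone_submodular_minus_weighted_sum)
qed

end
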